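(* There is an absolute constant $c>0$ such that for every odd $n$, every mapping $\phi$ from ${\sf XOR}$ to ${\sf Majority}$ on $\{0,1\}^n$, and every $i\in[n]$, we have $\mathbb{E}_{x}[{\sf dist}(\phi(x),\phi(x+e_i))]\ge c\sqrt{n}$, where $x$ is uniform in $\{0,1\}^n$.
   Context: ${\sf XOR}(x)=\sum_i x_i \bmod 2$; ${\sf Majority}(x)=1$ iff $\sum_i x_i>n/2$. A mapping from $f$ to $g$ is a bijection $\phi$ of $\{0,1\}^n$ with $f(z)=g(\phi(z))$ for all $z$. $e_i$ is the $i$-th unit vector, addition mod 2, ${\sf dist}$ Hamming distance. *)

theory Defs
  imports Complex_Main
begin

text \<open>Points of the Boolean cube {0,1}^n are boolean lists of length n
  (True = 1); coordinate i (0-based) is x ! i.\<close>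

definition cube :: "nat \<Rightarrow> bool list set" where
  "cube n = {x. length x = n}"

definition weight :: "bool list \<Rightarrow> nat" where
  "weight x = length (filter id x)"

definition XOR :: "bool list \<Rightarrow> bool" where
  "XOR x = odd (weight x)"

definition Majority :: "bool list \<Rightarrow> bool" where
  "Majority x = (real (weight x) > real (length x) / 2)"

text \<open>x + e_i (addition mod 2): flip coordinate i.\<close>
definition flip :: "bool list \<Rightarrow> nat \<Rightarrow> bool list" where
  "flip x i = x[i := \<not> x ! i]"

definition dist_H :: "bool list \<Rightarrow> bool list \<Rightarrow> nat" where
  "dist_H x y = card {j. j < length x \<and> x ! j \<noteq> y ! j}"

text \<open>A mapping from f to g on {0,1}^n: a bijection phi of the cube with f z = g (phi z).\<close>
definition is_mapping :: "nat \<Rightarrow> (bool list \<Rightarrow> bool) \<Rightarrow> (bool list \<Rightarrow> bool)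
    \<Rightarrow> (bool list \<Rightarrow> bool list) \<Rightarrow> bool" where
  "is_mapping n f g \<phi> \<longleftrightarrow> bij_betw \<phi> (cube n) (cube n) \<and> (\<forall>z \<in> cube n. f z = g (\<phi> z))"

end

theory Submission
  imports Defs
begin

text \<open>Flipping a coordinate changes the parity, so \<open>\<phi> x\<close> and \<open>\<phi> (x + e\<^sub>i)\<close> lie on
  opposite sides of the majority threshold, and their distance is at least the sum of their
  distances to the middle layer, i.e. half the sum of the absolute imbalances (number of ones minus
  number of zeros) of the two points. Since \<open>\<phi>\<close> and \<open>\<phi>\<close> composed with the flip are both
  bijections of the cube, averaging gives \<open>E dist \<ge> E \<bar>S\<bar>\<close>, where \<open>S\<close>, the imbalance of a
  uniform point, is a sum of \<open>n\<close> independent signs. Its moments \<open>E S\<^sup>2 = n\<close> and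
  \<open>E S\<^sup>4 = 3n\<^sup>2 - 2n\<close>, together with the pointwise bound \<open>4 n s\<^sup>2 - s\<^sup>4 \<le> 4 n\<^sup>3\<^sup>/\<^sup>2 \<bar>s\<bar>\<close>,
  give \<open>E \<bar>S\<bar> \<ge> \<surd>n / 4\<close>.\<close>

lemma cube_Suc: "cube (Suc n) = Cons True ` cube n \<union> Cons False ` cube n"
  unfolding cube_def by (auto simp: length_Suc_conv)

lemma finite_cube: "finite (cube n)"
  by (induction n) (auto simp: cube_Suc, simp add: cube_def)

lemma card_cube: "card (cube n) = 2 ^ n"
proof (induction n)
  case 0
  then show ?case by (simp add: cube_def)
next
  case (Suc n)
  have "card (cube (Suc n)) = card (Cons True ` cube n) + card (Cons False ` cube n)"
    unfolding cube_Suc by (rule card_Un_disjoint) (auto simp: finite_cube)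
  then show ?case using Suc by (simp add: card_image)
qed

lemma sum_cube_Suc: "(\<Sum>x\<in>cube (Suc n). f x) = (\<Sum>x\<in>cube n. f (True # x) + f (False # x))"
proof -
  have "(\<Sum>x\<in>cube (Suc n). f x) = sum f (Cons True ` cube n) + sum f (Cons False ` cube n)"
    unfolding cube_Suc by (rule sum.union_disjoint) (auto simp: finite_cube)
  then show ?thesis by (simp add: sum.reindex sum.distrib)
qed

definition imbalance :: "bool list \<Rightarrow> real" where
  "imbalance y = 2 * real (weight y) - real (length y)"

lemma imbalance_Cons: "imbalance (b # y) = imbalance y + (if b then 1 else -1)"
  by (simp add: imbalance_def weight_def)

lemma sum_imbalance_power2: "(\<Sum>y\<in>cube n. imbalance y ^ 2) = real n * 2 ^ n"
proof (induction n)
  case 0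
  then show ?case by (simp add: cube_def imbalance_def weight_def)
next
  case (Suc n)
  have "(\<Sum>y\<in>cube (Suc n). imbalance y ^ 2) = (\<Sum>y\<in>cube n. 2 * imbalance y ^ 2 + 2)"
    unfolding sum_cube_Suc by (simp add: imbalance_Cons power2_eq_square algebra_simps)
  also have "\<dots> = 2 * (\<Sum>y\<in>cube n. imbalance y ^ 2) + 2 * 2 ^ n"
    by (simp add: sum.distrib sum_distrib_left card_cube)
  finally show ?case using Suc by (simp add: algebra_simps)
qed

lemma sum_imbalance_power4:
  "(\<Sum>y\<in>cube n. imbalance y ^ 4) = (3 * real n ^ 2 - 2 * real n) * 2 ^ n"
proof (induction n)
  case 0
  then show ?case by (simp add: cube_def imbalance_def weight_def)
next
  case (Suc n)
  have "(\<Sum>y\<in>cube (Suc n). imbalance y ^ 4)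
      = (\<Sum>y\<in>cube n. 2 * imbalance y ^ 4 + 12 * imbalance y ^ 2 + 2)"
    unfolding sum_cube_Suc
    by (simp add: imbalance_Cons power2_eq_square power4_eq_xxxx algebra_simps)
  also have "\<dots> = 2 * (\<Sum>y\<in>cube n. imbalance y ^ 4) + 12 * (\<Sum>y\<in>cube n. imbalance y ^ 2) + 2 * 2 ^ n"
    by (simp add: sum.distrib sum_distrib_left card_cube)
  finally show ?case
    using Suc sum_imbalance_power2[of n] by (simp add: algebra_simps power2_eq_square)
qed

lemma abs_ge_quartic_minorant:
  fixes r s :: real
  assumes "r \<ge> 0"
  shows "4 * r^2 * s^2 - s^4 \<le> 4 * r^3 * \<bar>s\<bar>"
proof -
  define a where "a = \<bar>s\<bar>"
  have "a \<ge> 0" "s^2 = a^2" "s^4 = a^4"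
    by (simp_all add: a_def power_even_abs_numeral)
  have "a^3 - 4 * r^2 * a + 4 * r^3 \<ge> 0"
  proof (cases "a \<le> 2 * r")
    case True
    have "a^3 - 4 * r^2 * a + 4 * r^3 = (a - r)^2 * (a + 2 * r) + r^2 * (2 * r - a)"
      by (simp add: algebra_simps power2_eq_square power3_eq_cube)
    then show ?thesis using True \<open>a \<ge> 0\<close> assms by simp
  next
    case False
    then have "(2 * r)^2 \<le> a^2"
      using assms by (intro power_mono) auto
    then have "4 * r^2 * a \<le> a^2 * a"
      using \<open>a \<ge> 0\<close> by (intro mult_right_mono) (simp_all add: power_mult_distrib)
    then show ?thesis using assms by (simp add: power3_eq_cube power2_eq_square)
  qed
  then have "a * (a^3 - 4 * r^2 * a + 4 * r^3) \<ge> 0"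
    using \<open>a \<ge> 0\<close> by simp
  then show ?thesis
    unfolding \<open>s^2 = a^2\<close> \<open>s^4 = a^4\<close> a_def[symmetric]
    by (simp add: algebra_simps power2_eq_square power3_eq_cube power4_eq_xxxx)
qed

lemma sum_abs_imbalance_ge: "(\<Sum>y\<in>cube n. \<bar>imbalance y\<bar>) \<ge> 2 ^ n * sqrt (real n) / 4"
proof (cases "n = 0")
  case False
  define r where "r = sqrt (real n)"
  have "r > 0" "r^2 = real n" using False by (simp_all add: r_def)
  have "(\<Sum>y\<in>cube n. 4 * r^2 * imbalance y ^ 2 - imbalance y ^ 4)
      = 4 * r^2 * (\<Sum>y\<in>cube n. imbalance y ^ 2) - (\<Sum>y\<in>cube n. imbalance y ^ 4)"
    by (simp add: sum_subtractf sum_distrib_left)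
  also have "\<dots> = (real n ^ 2 + 2 * real n) * 2 ^ n"
    by (simp add: sum_imbalance_power2 sum_imbalance_power4 \<open>r^2 = real n\<close>)
       (simp add: algebra_simps power2_eq_square)
  finally have "real n ^ 2 * 2 ^ n \<le> (\<Sum>y\<in>cube n. 4 * r^2 * imbalance y ^ 2 - imbalance y ^ 4)"
    by simp
  also have "\<dots> \<le> 4 * r^3 * (\<Sum>y\<in>cube n. \<bar>imbalance y\<bar>)"
    unfolding sum_distrib_left
    by (rule sum_mono) (use \<open>r > 0\<close> abs_ge_quartic_minorant in auto)
  finally have "r^3 * (r * 2 ^ n) \<le> r^3 * (4 * (\<Sum>y\<in>cube n. \<bar>imbalance y\<bar>))"
    by (simp flip: \<open>r^2 = real n\<close> add: power2_eq_square power3_eq_cube algebra_simps)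
  then have "r * 2 ^ n \<le> 4 * (\<Sum>y\<in>cube n. \<bar>imbalance y\<bar>)"
    using \<open>r > 0\<close> by simp
  then show ?thesis by (simp add: r_def mult.commute)
qed simp

lemma weight_list_update:
  "i < length x \<Longrightarrow> weight (x[i := v]) + of_bool (x ! i) = weight x + of_bool v"
  unfolding weight_def
  by (subst (2) id_take_nth_drop[of i x]) (simp_all add: upd_conv_take_nth_drop)

lemma XOR_flip:
  assumes "i < length x"
  shows "XOR (flip x i) \<longleftrightarrow> \<not> XOR x"
proof -
  have "weight (flip x i) = Suc (weight x) \<or> weight x = Suc (weight (flip x i))"
    using weight_list_update[OF assms, of "\<not> x ! i"] unfolding flip_def by (cases "x ! i") auto
  then show ?thesis unfolding XOR_def by auto
qed

lemma flip_in_cube: "x \<in> cube n \<Longrightarrow> flip x i \<in> cube n"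
  by (simp add: cube_def flip_def)

lemma flip_flip: "flip (flip x i) i = x"
  by (cases "i < length x") (simp_all add: flip_def list_update_beyond)

lemma bij_betw_flip: "bij_betw (\<lambda>x. flip x i) (cube n) (cube n)"
  by (rule bij_betw_byWitness[where f' = "\<lambda>x. flip x i"]) (auto simp: flip_flip flip_in_cube)

lemma dist_H_eq_length_filter_zip:
  "length a = length b \<Longrightarrow> dist_H a b = length (filter (\<lambda>(u, v). u \<noteq> v) (zip a b))"
  unfolding dist_H_def length_filter_conv_card by (simp cong: conj_cong)

lemma abs_weight_diff_le_dist_H:
  "length a = length b \<Longrightarrow> \<bar>real (weight a) - real (weight b)\<bar> \<le> real (dist_H a b)"
proof (induction a b rule: list_induct2)
  case Nil
  then show ?case by (simp add: weight_def dist_H_def)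
next
  case (Cons x xs y ys)
  then show ?case by (auto simp: dist_H_eq_length_filter_zip weight_def)
qed

lemma Majority_iff_imbalance_pos: "Majority y \<longleftrightarrow> imbalance y > 0"
  by (auto simp: Majority_def imbalance_def)

lemma abs_imbalance_add_le_dist_H:
  assumes "length a = length b" "Majority a \<noteq> Majority b"
  shows "\<bar>imbalance a\<bar> + \<bar>imbalance b\<bar> \<le> 2 * real (dist_H a b)"
proof -
  have "\<bar>imbalance a\<bar> + \<bar>imbalance b\<bar> = \<bar>imbalance a - imbalance b\<bar>"
    using assms(2) unfolding Majority_iff_imbalance_pos by linarith
  also have "imbalance a - imbalance b = 2 * (real (weight a) - real (weight b))"
    using assms(1) by (simp add: imbalance_def)
  finally show ?thesis using abs_weight_diff_le_dist_H[OF assms(1)] by simp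
qed

lemma sum_abs_imbalance_le_sum_dist_H:
  assumes "is_mapping n f Majority \<phi>" and sensitive: "\<And>x. x \<in> cube n \<Longrightarrow> f (flip x i) \<noteq> f x"
  shows "(\<Sum>y\<in>cube n. \<bar>imbalance y\<bar>) \<le> (\<Sum>x\<in>cube n. real (dist_H (\<phi> x) (\<phi> (flip x i))))"
proof -
  have bij: "bij_betw \<phi> (cube n) (cube n)"
    and f_eq: "\<And>z. z \<in> cube n \<Longrightarrow> f z = Majority (\<phi> z)"
    using assms(1) unfolding is_mapping_def by auto
  have bij_flipped: "bij_betw (\<lambda>x. \<phi> (flip x i)) (cube n) (cube n)"
    using bij_betw_trans[OF bij_betw_flip bij] by (simp add: comp_def)
  have pair: "\<bar>imbalance (\<phi> x)\<bar> + \<bar>imbalance (\<phi> (flip x i))\<bar>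
      \<le> 2 * real (dist_H (\<phi> x) (\<phi> (flip x i)))" if "x \<in> cube n" for x
  proof (rule abs_imbalance_add_le_dist_H)
    have "\<phi> x \<in> cube n" "\<phi> (flip x i) \<in> cube n"
      using that bij_betw_apply[OF bij] bij_betw_apply[OF bij_flipped] by auto
    then show "length (\<phi> x) = length (\<phi> (flip x i))"
      by (simp add: cube_def)
    show "Majority (\<phi> x) \<noteq> Majority (\<phi> (flip x i))"
      using sensitive[OF that] f_eq[OF that] f_eq[OF flip_in_cube[OF that]] by simp
  qed
  have "2 * (\<Sum>y\<in>cube n. \<bar>imbalance y\<bar>)
      = (\<Sum>x\<in>cube n. \<bar>imbalance (\<phi> x)\<bar> + \<bar>imbalance (\<phi> (flip x i))\<bar>)"
    using sum.reindex_bij_betw[OF bij, of "\<lambda>y. \<bar>imbalance y\<bar>"]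
      sum.reindex_bij_betw[OF bij_flipped, of "\<lambda>y. \<bar>imbalance y\<bar>"]
    by (simp add: sum.distrib)
  also have "\<dots> \<le> 2 * (\<Sum>x\<in>cube n. real (dist_H (\<phi> x) (\<phi> (flip x i))))"
    unfolding sum_distrib_left by (rule sum_mono) (rule pair)
  finally show ?thesis by simp
qed

theorem mainTheorem6:
  shows "\<exists>c::real. c > 0 \<and>
    (\<forall>n::nat. \<forall>\<phi> i. odd n \<longrightarrow> is_mapping n XOR Majority \<phi> \<longrightarrow> i < n \<longrightarrow>
       (\<Sum>x\<in>cube n. real (dist_H (\<phi> x) (\<phi> (flip x i)))) / 2 ^ n \<ge> c * sqrt (real n))"
proof (intro exI[of _ "1/4"] conjI allI impI)
  fix n :: nat and \<phi> i
  assume "odd n" "is_mapping n XOR Majority \<phi>" "i < n"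
  have "XOR (flip x i) \<noteq> XOR x" if "x \<in> cube n" for x
    using XOR_flip \<open>i < n\<close> that by (simp add: cube_def)
  then have "2 ^ n * sqrt (real n) / 4 \<le> (\<Sum>x\<in>cube n. real (dist_H (\<phi> x) (\<phi> (flip x i))))"
    using sum_abs_imbalance_ge[of n] sum_abs_imbalance_le_sum_dist_H[OF \<open>is_mapping n XOR Majority \<phi>\<close>]
    by fastforce
  then show "1/4 * sqrt (real n) \<le> (\<Sum>x\<in>cube n. real (dist_H (\<phi> x) (\<phi> (flip x i)))) / 2 ^ n"
    by (simp add: field_simps)
qed simp

end
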